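(* Let $G=(V,E)$ be an undirected graph on $n$ nodes with edge weights $w:E\to\mathbb{R}^+$, let $0<\epsilon<1$, and let $H_0$ and $H$ be as in the construction described in the context. For any two nodes $s,t\in V$ such that the canonical shortest path $\pi_G(s,t)$ is missing more than $\mu^3/n$ edges in $H_0$, we have $\texttt{dist}_H(s,t)\le\texttt{dist}_G(s,t)+4W(s,t)$ with probability at least $1-\frac{1}{n^3}$.
   Context: Let $\mu=\lceil n^{2/5}\log^{1/5}n\rceil$. $\texttt{dist}$ denotes weighted distance, $w(P)$ the total weight of a path $P$, $\pi_G(u,v)$ a fixed (canonical) shortest $u\leadsto v$ path in $G$, $W=\max_{e\in E}w(e)$, and $W(s,t)$ the maximum edge weight on $\pi_G(s,t)$. $\Gamma_{H_0}(x)$ is $x$ together with its neighbors in $H_0$. A $\mu$-lightweight initialization of $G$ is the subgraph obtained by selecting, for every node, its $\mu$ lightest incident edges (all of them if it has fewer), ties broken arbitrarily. Weighted weak CSSSP with error: given gray edges $E_g$, source $s$, $w$, $\epsilon$, positive integer $g$; an $s\leadsto t$ path is $g$-short if it has fewer than $g$ gray edges and has the form $(s,s')\circ\pi_G(s',t')\circ(t',t)$ with $\pi_G(s',t')$ a shortest path and $(s,s'),(t',t)$ edges (or empty). A solution outputs for every $t$ an $s\leadsto t$ path $P(s,t)$ such that whenever a $g$-short $s\leadsto t$ path exists, $P(s,t)$ has at most $5g/\epsilon$ gray edges and $w(P(s,t))<w(P_g(s,t))+\epsilon W$ for every $s\leadsto t$ path $P_g(s,t)$ with fewer than $g$ gray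 edges (otherwise arbitrary). Construction: (1) Let $H_0=(V,E')$ be a $\mu$-lightweight initialization of $G$. (2) Sample $S_2$ by including each node independently with probability $1/\mu$; for each node $x$ with $(\{x\}\cup\Gamma_{H_0}(x))\cap S_2=\varnothing$, add all edges incident to $x$ to $E'$. (3) Sample $S_1$ by including each node independently with probability $9\mu/n$; for each $x\in S_1$ add to $E'$ the edges of a shortest-path tree of $G$ rooted at $x$ spanning $V$. (4) For each $x_1\in S_2$, solve weighted weak CSSSP with error on $G$ with source $x_1$, $g=\mu^3/n+2$, gray edges $E\setminus E'$ (the current $E'$), and error parameter $\epsilon$, obtaining paths $P(x_1,x_2)$; add the edges of $P(x_1,x_2)$ to $E'$ for every $x_2\in S_2$. Output $H=(V,E')$. The probability is over the random samples. *)

theory Defs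
  imports "HOL-Probability.Probability" "HOL-Probability.Product_PMF"
begin

definition simple_graph :: "'a set \<Rightarrow> 'a set set \<Rightarrow> bool" where
  "simple_graph V E \<longleftrightarrow> finite V \<and> (\<forall>e\<in>E. \<exists>u v. e = {u, v} \<and> u \<noteq> v \<and> u \<in> V \<and> v \<in> V)"

fun edges_of :: "'a list \<Rightarrow> 'a set list" where
  "edges_of (x # y # r) = {x, y} # edges_of (y # r)"
| "edges_of _ = []"

definition walk :: "'a set \<Rightarrow> 'a set set \<Rightarrow> 'a list \<Rightarrow> bool" where
  "walk V E p \<longleftrightarrow> p \<noteq> [] \<and> set p \<subseteq> V \<and> set (edges_of p) \<subseteq> E"

definition walk_from_to :: "'a set \<Rightarrow> 'a set set \<Rightarrow> 'a list \<Rightarrow> 'a \<Rightarrow> 'a \<Rightarrow> bool" where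
  "walk_from_to V E p u v \<longleftrightarrow> walk V E p \<and> hd p = u \<and> last p = v"

definition walk_weight :: "('a set \<Rightarrow> real) \<Rightarrow> 'a list \<Rightarrow> real" where
  "walk_weight w p = sum_list (map w (edges_of p))"

text \<open>Weighted distance in (V,E); \<infinity> if no path.\<close>
definition dist :: "'a set \<Rightarrow> 'a set set \<Rightarrow> ('a set \<Rightarrow> real) \<Rightarrow> 'a \<Rightarrow> 'a \<Rightarrow> ereal" where
  "dist V E w u v = Inf {ereal (walk_weight w p) | p. walk_from_to V E p u v}"

definition connected_graph :: "'a set \<Rightarrow> 'a set set \<Rightarrow> bool" where
  "connected_graph V E \<longleftrightarrow> (\<forall>u\<in>V. \<forall>v\<in>V. \<exists>p. walk_from_to V E p u v)"

definition shortest_path :: "'a set \<Rightarrow> 'a set set \<Rightarrow> ('a set \<Rightarrow> real) \<Rightarrow> 'a list \<Rightarrow> 'a \<Rightarrow> 'a \<Rightarrow> bool" where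
  "shortest_path V E w p u v \<longleftrightarrow> walk_from_to V E p u v \<and> ereal (walk_weight w p) = dist V E w u v"

definition incident :: "'a set set \<Rightarrow> 'a \<Rightarrow> 'a set set" where
  "incident E x = {e \<in> E. x \<in> e}"

definition mu :: "nat \<Rightarrow> nat" where
  "mu n = nat \<lceil>real n powr (2/5) * (log 2 (real n)) powr (1/5)\<rceil>"

text \<open>E0 is the edge set of a k-lightweight initialization of (V,E): every node
  selects its k lightest incident edges (all if fewer), ties broken arbitrarily.\<close>
definition lightweight_init :: "'a set \<Rightarrow> 'a set set \<Rightarrow> ('a set \<Rightarrow> real) \<Rightarrow> nat \<Rightarrow> 'a set set \<Rightarrow> bool" where
  "lightweight_init V E w k E0 \<longleftrightarrow>
     (\<exists>L. (\<forall>v\<in>V. L v \<subseteq> incident E v \<and> card (L v) = min k (card (incident E v)) \<and>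
                 (\<forall>e\<in>L v. \<forall>f\<in>incident E v - L v. w e \<le> w f))
          \<and> E0 = (\<Union>v\<in>V. L v))"

definition Gamma :: "'a set set \<Rightarrow> 'a \<Rightarrow> 'a set" where
  "Gamma E0 x = {x} \<union> {y. {x, y} \<in> E0}"

definition is_spt :: "'a set \<Rightarrow> 'a set set \<Rightarrow> ('a set \<Rightarrow> real) \<Rightarrow> 'a \<Rightarrow> 'a set set \<Rightarrow> bool" where
  "is_spt V E w x T \<longleftrightarrow> T \<subseteq> E \<and> connected_graph V T \<and> card T = card V - 1 \<and>
     (\<forall>v\<in>V. dist V T w x v = dist V E w x v)"

definition gray_count :: "'a set set \<Rightarrow> 'a list \<Rightarrow> nat" where
  "gray_count Eg p = length (filter (\<lambda>e. e \<in> Eg) (edges_of p))"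

definition Wmax :: "'a set set \<Rightarrow> ('a set \<Rightarrow> real) \<Rightarrow> real" where
  "Wmax E w = Max (w ` E)"

definition Wpath :: "('a set \<Rightarrow> real) \<Rightarrow> 'a list \<Rightarrow> real" where
  "Wpath w p = Max (w ` set (edges_of p))"

definition g_short :: "'a set \<Rightarrow> 'a set set \<Rightarrow> ('a \<Rightarrow> 'a \<Rightarrow> 'a list) \<Rightarrow> 'a set set \<Rightarrow> real
     \<Rightarrow> 'a \<Rightarrow> 'a \<Rightarrow> 'a list \<Rightarrow> bool" where
  "g_short V E cp Eg g s t q \<longleftrightarrow> walk_from_to V E q s t \<and> real (gray_count Eg q) < g \<and>
     (\<exists>s' t'. (s' = s \<or> {s, s'} \<in> E) \<and> (t' = t \<or> {t', t} \<in> E) \<and>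
        q = (if s' = s then [] else [s]) @ cp s' t' @ (if t' = t then [] else [t]))"

text \<open>P (a function of the target t) solves weighted weak CSSSP with error for
  gray edges Eg, source s, weights w, error eps and parameter g.\<close>
definition weak_csssp_sol :: "'a set \<Rightarrow> 'a set set \<Rightarrow> ('a set \<Rightarrow> real) \<Rightarrow> ('a \<Rightarrow> 'a \<Rightarrow> 'a list)
     \<Rightarrow> 'a set set \<Rightarrow> 'a \<Rightarrow> real \<Rightarrow> real \<Rightarrow> ('a \<Rightarrow> 'a list) \<Rightarrow> bool" where
  "weak_csssp_sol V E w cp Eg s eps g P \<longleftrightarrow>
     (\<forall>t\<in>V. walk_from_to V E (P t) s t \<and>
        ((\<exists>q. g_short V E cp Eg g s t q) \<longrightarrow>
           real (gray_count Eg (P t)) \<le> 5 * g / eps \<and>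
           (\<forall>q. walk_from_to V E q s t \<and> real (gray_count Eg q) < g \<longrightarrow>
                walk_weight w (P t) < walk_weight w q + eps * Wmax E w)))"

definition sample_set :: "'a set \<Rightarrow> real \<Rightarrow> 'a set pmf" where
  "sample_set V p = map_pmf (\<lambda>f. {x \<in> V. f x}) (Pi_pmf V False (\<lambda>_. bernoulli_pmf p))"

text \<open>The edge set of H as a function of the samples S1, S2 and of the (arbitrary but
  fixed) choices: H0 edges E0, shortest-path trees spt, CSSSP solver sol
  (sol Eg x1 is the solution for gray edges Eg and source x1).\<close>
definition H_edges1 :: "'a set \<Rightarrow> 'a set set \<Rightarrow> 'a set set \<Rightarrow> 'a set \<Rightarrow> 'a set set" where
  "H_edges1 V E E0 S2 = E0 \<union> \<Union>{incident E x | x. x \<in> V \<and> Gamma E0 x \<inter> S2 = {}}"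

definition H_edges2 :: "'a set \<Rightarrow> 'a set set \<Rightarrow> 'a set set \<Rightarrow> ('a \<Rightarrow> 'a set set) \<Rightarrow> 'a set \<Rightarrow> 'a set \<Rightarrow> 'a set set" where
  "H_edges2 V E E0 spt S1 S2 = H_edges1 V E E0 S2 \<union> \<Union>(spt ` S1)"

definition H_edges :: "'a set \<Rightarrow> 'a set set \<Rightarrow> 'a set set \<Rightarrow> ('a \<Rightarrow> 'a set set)
     \<Rightarrow> ('a set set \<Rightarrow> 'a \<Rightarrow> 'a \<Rightarrow> 'a list) \<Rightarrow> 'a set \<Rightarrow> 'a set \<Rightarrow> 'a set set" where
  "H_edges V E E0 spt sol S1 S2 =
     (let E2 = H_edges2 V E E0 spt S1 S2
      in E2 \<union> \<Union>{set (edges_of (sol (E - E2) x1 x2)) | x1 x2. x1 \<in> S2 \<and> x2 \<in> S2})"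

end

theory Submission
  imports Defs
begin

text \<open>Each of the \<open>k > \<mu>\<^sup>3/n\<close> edges of \<open>\<pi> = \<pi>\<^sub>G(s,t)\<close> missing from \<open>H\<^sub>0\<close> was rejected by
  both endpoints, so each endpoint has \<open>\<mu>\<close> neighbours in \<open>H\<^sub>0\<close>, all joined by edges no heavier
  than the missing one. For each \<open>c\<close>, take as anchor the endpoint between the \<open>c\<close>-th and
  \<open>(c+1)\<close>-th missing edges of the lighter of the two. A node adjacent to two of these anchors at least three apart along
  \<open>\<pi>\<close> would shortcut \<open>\<pi>\<close>, so the neighbourhoods cover at least \<open>k\<mu>/3\<close> nodes, and \<open>S\<^sub>1\<close> misses
  all of them with probability at most \<open>(1 - 9\<mu>/n)\<^bsup>k\<mu>/3\<^esup> \<le> n\<^sup>-\<^sup>3\<close>. If \<open>S\<^sub>1\<close> contains a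
  neighbour \<open>x\<close> of a node \<open>v\<close> of \<open>\<pi>\<close>, the shortest-path tree of \<open>x\<close> lies in \<open>H\<close> and yields an
  \<open>s\<close>-\<open>t\<close> path of weight at most \<open>dist\<^sub>G(s,t) + 2w(v,x) \<le> dist\<^sub>G(s,t) + 2W(s,t)\<close>.\<close>

section \<open>Walks and prefix weights\<close>

lemma length_edges_of: "length (edges_of xs) = length xs - 1"
  by (induction xs rule: edges_of.induct) auto

lemma nth_edges_of: "Suc i < length xs \<Longrightarrow> edges_of xs ! i = {xs ! i, xs ! Suc i}"
proof (induction xs arbitrary: i rule: edges_of.induct)
  case (1 x y r)
  then show ?case by (cases i) auto
qed auto

lemma edges_of_append_tl:
  "xs \<noteq> [] \<Longrightarrow> ys \<noteq> [] \<Longrightarrow> last xs = hd ys \<Longrightarrow> edges_of (xs @ tl ys) = edges_of xs @ edges_of ys"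
proof (induction xs rule: edges_of.induct)
  case (1 x y r)
  then show ?case by simp
qed (auto simp: neq_Nil_conv)

lemma edges_of_rev: "edges_of (rev xs) = rev (edges_of xs)"
proof (induction xs rule: edges_of.induct)
  case (1 x y r)
  have "edges_of (rev (x # y # r)) = edges_of (rev (y # r) @ tl [y, x])" by simp
  also have "\<dots> = edges_of (rev (y # r)) @ [{y, x}]"
    by (subst edges_of_append_tl) (auto simp: last_rev)
  finally show ?case using 1 by (simp add: insert_commute)
qed auto

lemma edges_of_take: "edges_of (take (Suc i) xs) = take i (edges_of xs)"
proof (induction xs arbitrary: i rule: edges_of.induct)
  case (1 x y r)
  then show ?case by (cases i) auto
qed (auto simp: take_Suc)

lemma edges_of_drop: "edges_of (drop i xs) = drop i (edges_of xs)"
proof (induction xs arbitrary: i rule: edges_of.induct)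
  case (1 x y r)
  then show ?case by (cases i) (auto simp: drop_Cons')
qed (auto simp: drop_Cons')

lemma walk_from_to_append_tl:
  assumes "walk_from_to V E p u x" "walk_from_to V E q x v"
  shows "walk_from_to V E (p @ tl q) u v"
    and "walk_weight w (p @ tl q) = walk_weight w p + walk_weight w q"
proof -
  have ne: "p \<noteq> []" "q \<noteq> []" and lh: "last p = hd q"
    using assms by (auto simp: walk_from_to_def walk_def)
  have "set (tl q) \<subseteq> set q" by (simp add: list.set_sel(2) subsetI ne)
  moreover have "last (p @ tl q) = last q"
    using ne lh by (cases q) auto
  ultimately show "walk_from_to V E (p @ tl q) u v"
    using assms ne lh by (auto simp: walk_from_to_def walk_def edges_of_append_tl)
  show "walk_weight w (p @ tl q) = walk_weight w p + walk_weight w q"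
    using ne lh by (simp add: walk_weight_def edges_of_append_tl)
qed

lemma walk_from_to_rev: "walk_from_to V E p u v \<Longrightarrow> walk_from_to V E (rev p) v u"
  by (auto simp: walk_from_to_def walk_def edges_of_rev hd_rev last_rev)

lemma walk_weight_rev: "walk_weight w (rev p) = walk_weight w p"
  by (simp add: walk_weight_def edges_of_rev rev_map[symmetric] sum_list_rev)

lemma walk_from_to_edge:
  "u \<in> V \<Longrightarrow> v \<in> V \<Longrightarrow> {u, v} \<in> E \<Longrightarrow> walk_from_to V E [u, v] u v"
  by (simp add: walk_from_to_def walk_def)

lemma walk_weight_edge: "walk_weight w [u, v] = w {u, v}"
  by (simp add: walk_weight_def)

lemma walk_from_to_take:
  assumes "walk_from_to V E p u v" "i < length p"
  shows "walk_from_to V E (take (Suc i) p) u (p ! i)"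
proof -
  have "last (take (Suc i) p) = p ! i"
    using assms(2) by (simp add: take_Suc_conv_app_nth)
  then show ?thesis
    using assms set_take_subset[of "Suc i" p] set_take_subset[of i "edges_of p"]
    by (auto simp: walk_from_to_def walk_def edges_of_take)
qed

lemma walk_from_to_drop:
  "walk_from_to V E p u v \<Longrightarrow> i < length p \<Longrightarrow> walk_from_to V E (drop i p) (p ! i) v"
  using set_drop_subset[of i p] set_drop_subset[of i "edges_of p"]
  by (auto simp: walk_from_to_def walk_def edges_of_drop hd_drop_conv_nth)

definition prefix_weight :: "('a set \<Rightarrow> real) \<Rightarrow> 'a list \<Rightarrow> nat \<Rightarrow> real" where
  "prefix_weight w p i = walk_weight w (take (Suc i) p)"

lemma walk_weight_split: "walk_weight w p = prefix_weight w p i + walk_weight w (drop i p)"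
proof -
  have "edges_of p = take i (edges_of p) @ drop i (edges_of p)" by simp
  then show ?thesis
    by (metis prefix_weight_def walk_weight_def edges_of_take edges_of_drop map_append sum_list_append)
qed

lemma prefix_weight_mono:
  assumes "\<forall>e\<in>set (edges_of p). 0 \<le> w e"
  shows "mono (prefix_weight w p)"
proof (rule monoI)
  fix i j :: nat assume "i \<le> j"
  then have "take j (edges_of p) = take i (edges_of p) @ take (j - i) (drop i (edges_of p))"
    by (metis le_add_diff_inverse take_add)
  moreover have "0 \<le> sum_list (map w (take (j - i) (drop i (edges_of p))))"
    using assms by (intro sum_list_nonneg) (auto dest: in_set_takeD in_set_dropD)
  ultimately show "prefix_weight w p i \<le> prefix_weight w p j"
    by (simp add: prefix_weight_def walk_weight_def edges_of_take)
qed

lemma prefix_weight_Suc: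
  assumes "Suc i < length p"
  shows "prefix_weight w p (Suc i) = prefix_weight w p i + w (edges_of p ! i)"
proof -
  have "i < length (edges_of p)" using assms by (simp add: length_edges_of)
  then show ?thesis
    by (simp add: prefix_weight_def walk_weight_def edges_of_take take_Suc_conv_app_nth)
qed

section \<open>Distances\<close>

lemma dist_le_walk: "walk_from_to V E p u v \<Longrightarrow> dist V E w u v \<le> ereal (walk_weight w p)"
  unfolding dist_def by (rule Inf_lower) blast

lemma dist_lessE:
  assumes "dist V E w u v < ereal c"
  obtains p where "walk_from_to V E p u v" "walk_weight w p < c"
  using assms unfolding dist_def by (auto simp: Inf_less_iff)

lemma dist_commute: "dist V E w u v = dist V E w v u"
proof -
  have le: "dist V E w u v \<le> dist V E w v u" for u v
    unfolding dist_def[of V E w v u]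
    by (auto intro!: Inf_greatest dist_le_walk[THEN order_trans] walk_from_to_rev
        simp: walk_weight_rev)
  show ?thesis by (rule antisym[OF le le])
qed

lemma dist_mono_edges: "E \<subseteq> E' \<Longrightarrow> dist V E' w u v \<le> dist V E w u v"
  unfolding dist_def[of V E]
  by (auto intro!: Inf_greatest dist_le_walk simp: walk_from_to_def walk_def)

lemma dist_triangle_le:
  assumes "dist V E w u x \<le> ereal a" "dist V E w x v \<le> ereal b"
  shows "dist V E w u v \<le> ereal (a + b)"
proof (rule ereal_le_epsilon2)
  fix e :: real assume "0 < e"
  then have "dist V E w u x < ereal (a + e / 2)" "dist V E w x v < ereal (b + e / 2)"
    using assms by (auto intro: le_less_trans)
  then obtain p q where p: "walk_from_to V E p u x" "walk_weight w p < a + e / 2"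
    and q: "walk_from_to V E q x v" "walk_weight w q < b + e / 2"
    by (metis dist_lessE)
  have "dist V E w u v \<le> ereal (walk_weight w (p @ tl q))"
    by (rule dist_le_walk[OF walk_from_to_append_tl(1)[OF p(1) q(1)]])
  also have "\<dots> \<le> ereal (a + b) + ereal e"
    using p q walk_from_to_append_tl(2)[OF p(1) q(1), of w] by simp
  finally show "dist V E w u v \<le> ereal (a + b) + ereal e" .
qed

lemma shortest_path_common_neighbour:
  assumes sp: "shortest_path V E w p s t" and ij: "i \<le> j" "j < length p"
    and u: "u \<in> V" "{p ! i, u} \<in> E" "{u, p ! j} \<in> E"
  shows "prefix_weight w p j - prefix_weight w p i \<le> w {p ! i, u} + w {u, p ! j}"
proof -
  have p: "walk_from_to V E p s t" and dp: "dist V E w s t = ereal (walk_weight w p)"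
    using sp by (auto simp: shortest_path_def)
  have pV: "p ! i \<in> V" "p ! j \<in> V"
    using p ij by (auto simp: walk_from_to_def walk_def)
  have "dist V E w s (p ! i) \<le> ereal (prefix_weight w p i)"
    using dist_le_walk[OF walk_from_to_take[OF p]] ij by (simp add: prefix_weight_def)
  moreover have "dist V E w (p ! i) u \<le> ereal (w {p ! i, u})"
    using dist_le_walk[OF walk_from_to_edge[OF pV(1) u(1,2)]] by (simp add: walk_weight_edge)
  moreover have "dist V E w u (p ! j) \<le> ereal (w {u, p ! j})"
    using dist_le_walk[OF walk_from_to_edge[OF u(1) pV(2) u(3)]] by (simp add: walk_weight_edge)
  moreover have "dist V E w (p ! j) t \<le> ereal (walk_weight w (drop j p))"
    using dist_le_walk[OF walk_from_to_drop[OF p ij(2)]] .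
  ultimately have "dist V E w s t
      \<le> ereal (prefix_weight w p i + w {p ! i, u} + w {u, p ! j} + walk_weight w (drop j p))"
    by (metis dist_triangle_le)
  then show ?thesis
    using dp walk_weight_split[of w p j] by simp
qed

lemma dist_le_via_spt:
  assumes sp: "shortest_path V E w p s t" and i: "i < length p"
    and x: "x \<in> V" "{p ! i, x} \<in> E" and T: "is_spt V E w x T" "T \<subseteq> H"
  shows "dist V H w s t \<le> ereal (walk_weight w p + 2 * w {p ! i, x})"
proof -
  have p: "walk_from_to V E p s t" using sp by (simp add: shortest_path_def)
  have V: "p ! i \<in> V" "s \<in> V" "t \<in> V"
    using p i by (auto simp: walk_from_to_def walk_def)
  have dx: "dist V E w x (p ! i) \<le> ereal (w {p ! i, x})"
    using dist_le_walk[OF walk_from_to_edge[OF x(1) V(1)]] x(2)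
    by (simp add: walk_weight_edge insert_commute)
  have "dist V E w (p ! i) s \<le> ereal (prefix_weight w p i)"
    using dist_le_walk[OF walk_from_to_take[OF p i]] dist_commute
    by (metis prefix_weight_def)
  with dx have "dist V E w x s \<le> ereal (w {p ! i, x} + prefix_weight w p i)"
    by (rule dist_triangle_le)
  then have sx: "dist V H w s x \<le> ereal (w {p ! i, x} + prefix_weight w p i)"
    using T V dist_mono_edges[OF T(2), of V w x s] dist_commute
    by (metis is_spt_def order_trans)
  have "dist V E w (p ! i) t \<le> ereal (walk_weight w (drop i p))"
    using dist_le_walk[OF walk_from_to_drop[OF p i]] .
  with dx have "dist V E w x t \<le> ereal (w {p ! i, x} + walk_weight w (drop i p))"
    by (rule dist_triangle_le)
  then have xt: "dist V H w x t \<le> ereal (w {p ! i, x} + walk_weight w (drop i p))"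
    using T V dist_mono_edges[OF T(2), of V w x t]
    by (metis is_spt_def order_trans)
  show ?thesis
    using dist_triangle_le[OF sx xt] walk_weight_split[of w p i] by (simp add: algebra_simps)
qed

section \<open>Light neighbourhoods along a shortest path\<close>

text \<open>Anchor \<open>f c\<close> lies between the \<open>c\<close>-th and \<open>(c+1)\<close>-th marked increments, next to the
  lighter one. Two anchors at least three apart thus enclose three marked increments, two of
  which dominate the increments chosen for the anchors.\<close>
lemma marked_increment_anchors:
  fixes P :: "nat \<Rightarrow> real" and I :: "nat set"
  assumes mono: "mono P" and fin: "finite I" and pos: "\<forall>i\<in>I. P i < P (Suc i)"
  obtains g f :: "nat \<Rightarrow> nat"
  where "\<forall>c<card I. g c \<in> I \<and> (f c = g c \<or> f c = Suc (g c))"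
    and "\<forall>c d. c + 3 \<le> d \<longrightarrow> d < card I \<longrightarrow>
           (P (Suc (g c)) - P (g c)) + (P (Suc (g d)) - P (g d)) < P (f d) - P (f c)"
proof -
  define k where "k = card I"
  define m where "m c = sorted_list_of_set I ! c" for c
  define \<delta> where "\<delta> i = P (Suc i) - P i" for i
  define left where "left c \<longleftrightarrow> Suc c < k \<and> \<delta> (m (Suc c)) < \<delta> (m c)" for c
  define g where "g c = (if left c then m (Suc c) else m c)" for c
  define f where "f c = (if left c then m (Suc c) else Suc (m c))" for c
  have mI: "m c \<in> I" if "c < k" for c
    using that fin unfolding m_def k_def
    by (metis nth_mem set_sorted_list_of_set length_sorted_list_of_set)
  have m_less: "m c < m d" if "c < d" "d < k" for c d
    using that fin by (simp add: m_def k_def sorted_wrt_nth_less)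
  have \<delta>_pos: "0 < \<delta> (m c)" if "c < k" for c
    using pos mI[OF that] by (simp add: \<delta>_def)
  have f_ge: "P (Suc (m c)) \<le> P (f c)" if "c < k" for c
    using m_less[of c "Suc c"] by (auto simp: f_def left_def intro: monoD[OF mono])
  have f_le: "P (f c) \<le> P (m (Suc c))" if "Suc c < k" for c
    using m_less[OF lessI that] by (auto simp: f_def intro: monoD[OF mono])
  have g_le: "\<delta> (g c) \<le> \<delta> (m c)" "Suc c < k \<Longrightarrow> \<delta> (g c) \<le> \<delta> (m (Suc c))" for c
    by (auto simp: g_def left_def)
  have "(P (Suc (g c)) - P (g c)) + (P (Suc (g d)) - P (g d)) < P (f d) - P (f c)"
    if cd: "c + 3 \<le> d" "d < k" for c d
  proof -
    have "P (Suc (m (Suc c))) \<le> P (m (Suc (Suc c)))" "P (Suc (m (Suc (Suc c)))) \<le> P (m d)"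
      using m_less[of "Suc c" "Suc (Suc c)"] m_less[of "Suc (Suc c)" d] cd
      by (auto intro: monoD[OF mono])
    moreover have "P (Suc (m d)) \<le> P (f d)" "P (f c) \<le> P (m (Suc c))"
      using f_ge[of d] f_le[of c] cd by auto
    moreover have "\<delta> (g c) \<le> \<delta> (m (Suc c))" "\<delta> (g d) \<le> \<delta> (m d)" "0 < \<delta> (m (Suc (Suc c)))"
      using g_le[of c] g_le[of d] \<delta>_pos[of "Suc (Suc c)"] cd by auto
    ultimately show ?thesis by (simp add: \<delta>_def)
  qed
  moreover have "g c \<in> I \<and> (f c = g c \<or> f c = Suc (g c))" if "c < k" for c
    using mI that by (auto simp: g_def f_def left_def)
  ultimately show ?thesis using that unfolding k_def by blast
qed

lemma sum_card_le_card_Union: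
  assumes "finite A" "finite U" "\<And>c. c \<in> A \<Longrightarrow> N c \<subseteq> U"
    and "\<And>u. u \<in> U \<Longrightarrow> card {c \<in> A. u \<in> N c} \<le> r"
  shows "(\<Sum>c\<in>A. card (N c)) \<le> r * card U"
proof -
  have "(\<Sum>c\<in>A. card (N c)) = (\<Sum>c\<in>A. \<Sum>u\<in>U. of_bool (u \<in> N c))"
    using assms(2,3) by (intro sum.cong) (auto simp: Int_absorb1 Int_def[symmetric])
  also have "\<dots> = (\<Sum>u\<in>U. card {c \<in> A. u \<in> N c})"
    using assms(1) by (subst sum.swap) (simp add: Int_def)
  also have "\<dots> \<le> r * card U"
    using sum_bounded_above[of U "\<lambda>u. card {c \<in> A. u \<in> N c}" r] assms(4)
    by (simp add: mult.commute)
  finally show ?thesis .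
qed

lemma card_le_if_diameter_le:
  fixes C :: "nat set"
  assumes "\<And>c d. c \<in> C \<Longrightarrow> d \<in> C \<Longrightarrow> c < d \<Longrightarrow> d \<le> c + r"
  shows "card C \<le> Suc r"
proof (cases "finite C \<and> C \<noteq> {}")
  case True
  have "C \<subseteq> {Min C..Min C + r}"
  proof
    fix d assume d: "d \<in> C"
    then have "Min C \<le> d" using True by simp
    then show "d \<in> {Min C..Min C + r}"
      using assms[OF Min_in[OF conjunct1[OF True] conjunct2[OF True]] d] by (cases "Min C = d") auto
  qed
  then show ?thesis
    using card_mono[of "{Min C..Min C + r}" C] by simp
qed auto

lemma simple_graph_edgeD:
  "simple_graph V E \<Longrightarrow> {u, v} \<in> E \<Longrightarrow> u \<noteq> v \<and> u \<in> V \<and> v \<in> V"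
  unfolding simple_graph_def by (metis doubleton_eq_iff insert_absorb2 insert_iff singleton_insert_inj_eq)

lemma simple_graph_finite_edges: "simple_graph V E \<Longrightarrow> finite E"
  unfolding simple_graph_def by (metis (no_types, lifting) Pow_iff empty_subsetI finite_Pow_iff
      finite_subset insert_subset subsetI)

lemma simple_graph_card_ge_2: "simple_graph V E \<Longrightarrow> e \<in> E \<Longrightarrow> 2 \<le> card V"
  unfolding simple_graph_def by (metis card_2_iff card_mono empty_subsetI insert_subset)

lemma lightweight_init_neighbours:
  assumes g: "simple_graph V E" and H0: "lightweight_init V E w K E0"
    and e: "e \<in> E" "e \<notin> E0" "v \<in> e"
  obtains N where "N \<subseteq> V" "card N = K" "\<forall>u\<in>N. {v, u} \<in> E \<and> w {v, u} \<le> w e"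
proof -
  obtain L where L: "\<forall>v\<in>V. L v \<subseteq> incident E v \<and> card (L v) = min K (card (incident E v)) \<and>
      (\<forall>e\<in>L v. \<forall>f\<in>incident E v - L v. w e \<le> w f)" and E0: "E0 = (\<Union>v\<in>V. L v)"
    using H0 unfolding lightweight_init_def by blast
  have v: "v \<in> V" using g e by (auto simp: simple_graph_def)
  have ei: "e \<in> incident E v - L v" using e v E0 by (auto simp: incident_def)
  have "card (L v) < card (incident E v)"
    using L v ei simple_graph_finite_edges[OF g]
    by (intro psubset_card_mono) (auto simp: incident_def)
  then have cL: "card (L v) = K" using L v by simp
  define N where "N = {u. {v, u} \<in> L v}"
  have "bij_betw (\<lambda>u. {v, u}) N (L v)"
  proof (rule bij_betwI')
    fix u u' assume "u \<in> N" "u' \<in> N"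
    then have "{v, u} \<in> E" "{v, u'} \<in> E" using L v by (auto simp: incident_def N_def)
    then have "u \<noteq> v" "u' \<noteq> v" using simple_graph_edgeD[OF g] by blast+
    then show "({v, u} = {v, u'}) = (u = u')" by (auto simp: doubleton_eq_iff)
  next
    fix f assume f: "f \<in> L v"
    then have "f \<in> E" "v \<in> f" using L v by (auto simp: incident_def)
    then obtain a b where "f = {a, b}" using g by (auto simp: simple_graph_def)
    then have "f = {v, if v = a then b else a}" using \<open>v \<in> f\<close> by auto
    then show "\<exists>u\<in>N. f = {v, u}" using f by (auto simp: N_def)
  qed (simp add: N_def)
  then have "card N = K" using cL by (simp add: bij_betw_same_card)
  moreover have "\<forall>u\<in>N. {v, u} \<in> E \<and> w {v, u} \<le> w e"
    using L v ei by (auto simp: N_def incident_def)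
  moreover have "N \<subseteq> V"
    using L v simple_graph_edgeD[OF g] unfolding N_def incident_def by blast
  ultimately show ?thesis using that by blast
qed

lemma missing_edge_anchors:
  fixes E0 :: "'a set set"
  assumes wpos: "\<forall>e\<in>set (edges_of p). 0 < w e"
  defines "k \<equiv> length (filter (\<lambda>e. e \<notin> E0) (edges_of p))"
  obtains f :: "nat \<Rightarrow> nat" and e :: "nat \<Rightarrow> 'a set"
  where "\<forall>c<k. f c < length p \<and> e c \<in> set (edges_of p) \<and> e c \<notin> E0 \<and> p ! f c \<in> e c"
    and "\<forall>c d. c + 3 \<le> d \<longrightarrow> d < k \<longrightarrow>
           w (e c) + w (e d) < prefix_weight w p (f d) - prefix_weight w p (f c)"
proof -
  define I where "I = {i. i < length (edges_of p) \<and> edges_of p ! i \<notin> E0}"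
  have k: "k = card I" by (simp add: k_def I_def length_filter_conv_card)
  have inc: "prefix_weight w p (Suc i) - prefix_weight w p i = w (edges_of p ! i)" if "i \<in> I" for i
  proof -
    have "Suc i < length p" using that by (auto simp: I_def length_edges_of)
    then show ?thesis by (simp add: prefix_weight_Suc)
  qed
  have mono: "mono (prefix_weight w p)"
    using wpos by (intro prefix_weight_mono) (auto simp: less_imp_le)
  have fin: "finite I" by (simp add: I_def)
  have pos: "\<forall>i\<in>I. prefix_weight w p i < prefix_weight w p (Suc i)"
  proof
    fix i assume i: "i \<in> I"
    then have "edges_of p ! i \<in> set (edges_of p)" by (simp add: I_def)
    then show "prefix_weight w p i < prefix_weight w p (Suc i)" using inc[OF i] wpos by force
  qed
  obtain g f
    where gf: "\<forall>c<card I. g c \<in> I \<and> (f c = g c \<or> f c = Suc (g c))"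
      and spread: "\<forall>c d. c + 3 \<le> d \<longrightarrow> d < card I \<longrightarrow>
         (prefix_weight w p (Suc (g c)) - prefix_weight w p (g c))
           + (prefix_weight w p (Suc (g d)) - prefix_weight w p (g d))
         < prefix_weight w p (f d) - prefix_weight w p (f c)"
    using marked_increment_anchors[OF mono fin pos] by blast
  define e where "e c = edges_of p ! g c" for c
  have "f c < length p \<and> e c \<in> set (edges_of p) \<and> e c \<notin> E0 \<and> p ! f c \<in> e c" if "c < k" for c
    using gf that nth_edges_of[of "g c" p]
    by (auto simp: k e_def I_def length_edges_of)
  moreover have "w (e c) + w (e d) < prefix_weight w p (f d) - prefix_weight w p (f c)"
    if "c + 3 \<le> d" "d < k" for c d
    using spread that gf inc by (simp add: k e_def)
  ultimately show ?thesis using that by blast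
qed

lemma missing_edge_neighbourhoods:
  assumes g: "simple_graph V E" and wpos: "\<forall>e\<in>E. 0 < w e"
    and H0: "lightweight_init V E w K E0" and sp: "shortest_path V E w p s t"
  defines "k \<equiv> length (filter (\<lambda>e. e \<notin> E0) (edges_of p))"
  obtains N :: "nat \<Rightarrow> 'a set"
  where "\<forall>c<k. N c \<subseteq> V \<and> card (N c) = K \<and>
           (\<forall>u\<in>N c. \<exists>i<length p. {p ! i, u} \<in> E \<and> w {p ! i, u} \<le> Wpath w p)"
    and "\<forall>c d u. c < d \<longrightarrow> d < k \<longrightarrow> u \<in> N c \<longrightarrow> u \<in> N d \<longrightarrow> d \<le> c + 2"
proof -
  have pE: "set (edges_of p) \<subseteq> E"
    using sp by (simp add: shortest_path_def walk_from_to_def walk_def)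
  obtain f e where fe: "\<forall>c<k. f c < length p \<and> e c \<in> set (edges_of p) \<and> e c \<notin> E0 \<and> p ! f c \<in> e c"
    and spread: "\<forall>c d. c + 3 \<le> d \<longrightarrow> d < k \<longrightarrow>
         w (e c) + w (e d) < prefix_weight w p (f d) - prefix_weight w p (f c)"
    using missing_edge_anchors[of p w E0] pE wpos unfolding k_def by blast
  have "\<exists>N. N \<subseteq> V \<and> card N = K \<and> (\<forall>u\<in>N. {p ! f c, u} \<in> E \<and> w {p ! f c, u} \<le> w (e c))"
    if "c < k" for c
  proof -
    have "e c \<in> E" "e c \<notin> E0" "p ! f c \<in> e c" using fe pE that by auto
    from lightweight_init_neighbours[OF g H0 this] show ?thesis by blast
  qed
  then obtain N where N: "\<And>c. c < k \<Longrightarrow> N c \<subseteq> V \<and> card (N c) = K \<and>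
      (\<forall>u\<in>N c. {p ! f c, u} \<in> E \<and> w {p ! f c, u} \<le> w (e c))"
    by metis
  have mono: "mono (prefix_weight w p)"
    using pE wpos by (intro prefix_weight_mono) (auto simp: less_imp_le)
  have "d \<le> c + 2" if cd: "c < d" "d < k" and u: "u \<in> N c" "u \<in> N d" for u c d
  proof (rule ccontr)
    assume "\<not> d \<le> c + 2"
    then have far: "w (e c) + w (e d) < prefix_weight w p (f d) - prefix_weight w p (f c)"
      using spread cd by simp
    have "e c \<in> E" "e d \<in> E" using fe pE cd by auto
    then have "0 < w (e c)" "0 < w (e d)" using wpos by auto
    with far have "f c \<le> f d"
      using monoD[OF mono, of "f d" "f c"] by linarith
    then have "prefix_weight w p (f d) - prefix_weight w p (f c) \<le> w {p ! f c, u} + w {u, p ! f d}"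
      using N[of c] N[of d] fe cd u
      by (intro shortest_path_common_neighbour[OF sp]) (auto simp: insert_commute)
    moreover have "w {p ! f c, u} \<le> w (e c)" "w {u, p ! f d} \<le> w (e d)"
      using N[of c] N[of d] cd u by (auto simp: insert_commute)
    ultimately show False using far by linarith
  qed
  moreover have "\<forall>c<k. N c \<subseteq> V \<and> card (N c) = K \<and>
      (\<forall>u\<in>N c. \<exists>i<length p. {p ! i, u} \<in> E \<and> w {p ! i, u} \<le> Wpath w p)"
    using N fe unfolding Wpath_def by (fastforce intro: order_trans Max_ge)
  ultimately show ?thesis using that by blast
qed

lemma many_light_path_neighbours:
  assumes g: "simple_graph V E" and wpos: "\<forall>e\<in>E. 0 < w e"
    and H0: "lightweight_init V E w K E0" and sp: "shortest_path V E w p s t"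
  obtains U where "U \<subseteq> V" "length (filter (\<lambda>e. e \<notin> E0) (edges_of p)) * K \<le> 3 * card U"
    "\<forall>u\<in>U. \<exists>i<length p. {p ! i, u} \<in> E \<and> w {p ! i, u} \<le> Wpath w p"
proof -
  define k where "k = length (filter (\<lambda>e. e \<notin> E0) (edges_of p))"
  obtain N where N: "\<forall>c<k. N c \<subseteq> V \<and> card (N c) = K \<and>
           (\<forall>u\<in>N c. \<exists>i<length p. {p ! i, u} \<in> E \<and> w {p ! i, u} \<le> Wpath w p)"
    and overlap: "\<forall>c d u. c < d \<longrightarrow> d < k \<longrightarrow> u \<in> N c \<longrightarrow> u \<in> N d \<longrightarrow> d \<le> c + 2"
    using missing_edge_neighbourhoods[OF g wpos H0 sp] unfolding k_def by blast
  define U where "U = (\<Union>c<k. N c)"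
  have UV: "U \<subseteq> V" using N by (auto simp: U_def)
  have "finite V" using g by (simp add: simple_graph_def)
  with UV have "finite U" by (rule finite_subset)
  have "k * K = (\<Sum>c<k. card (N c))" using N by simp
  also have "\<dots> \<le> 3 * card U"
    using overlap \<open>finite U\<close>
    by (intro sum_card_le_card_Union card_le_if_diameter_le[of _ 2, simplified]) (auto simp: U_def)
  finally show ?thesis
    using that UV N unfolding U_def k_def by blast
qed

section \<open>Sampling\<close>

lemma prob_sample_set_meets:
  assumes fin: "finite V" and UV: "U \<subseteq> V" and p: "0 \<le> p" "p \<le> 1"
  shows "measure_pmf.prob (sample_set V p) {S. S \<inter> U \<noteq> {}} = 1 - (1 - p) ^ card U"
proof -
  define B where "B x = (if x \<in> U then {False} else UNIV)" for x
  have pre: "(\<lambda>f. {x \<in> V. f x}) -` {S. S \<inter> U = {}} = Pi V B"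
    using UV by (auto simp: B_def Pi_def)
  have "measure_pmf.prob (sample_set V p) {S. S \<inter> U = {}}
        = measure_pmf.prob (Pi_pmf V False (\<lambda>_. bernoulli_pmf p)) (Pi V B)"
    unfolding sample_set_def measure_map_pmf pre by (rule refl)
  also have "\<dots> = (\<Prod>x\<in>V. measure_pmf.prob (bernoulli_pmf p) (B x))"
    using fin by (rule measure_Pi_pmf_Pi)
  also have "\<dots> = (\<Prod>x\<in>V. if x \<in> U then 1 - p else 1)"
    using p by (intro prod.cong) (auto simp: B_def measure_pmf_single)
  also have "\<dots> = (1 - p) ^ card U"
    using fin UV by (simp add: prod.If_cases Int_absorb1)
  finally have "measure_pmf.prob (sample_set V p) {S. S \<inter> U = {}} = (1 - p) ^ card U" .
  moreover have "{S. S \<inter> U \<noteq> {}} = space (measure_pmf (sample_set V p)) - {S. S \<inter> U = {}}"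
    by auto
  ultimately show ?thesis
    using measure_pmf.prob_compl[of "{S. S \<inter> U = {}}" "sample_set V p"] by simp
qed

lemma measure_pair_pmf_ge_fst:
  assumes "\<And>x y. x \<in> X \<Longrightarrow> (x, y) \<in> Y"
  shows "measure_pmf.prob A X \<le> measure_pmf.prob (pair_pmf A B) Y"
proof -
  have "measure_pmf.prob A X = measure_pmf.prob (map_pmf fst (pair_pmf A B)) X"
    by (simp add: map_fst_pair_pmf)
  also have "\<dots> = measure_pmf.prob (pair_pmf A B) (fst -` X)" by simp
  also have "\<dots> \<le> measure_pmf.prob (pair_pmf A B) Y"
    using assms by (intro measure_pmf.finite_measure_mono) auto
  finally show ?thesis .
qed

lemma mu_pow_5_ge:
  assumes n: "2 \<le> n"
  shows "real n ^ 2 * log 2 (real n) \<le> real (mu n) ^ 5" and "1 \<le> mu n"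
proof -
  define y where "y = real n powr (2/5) * log 2 (real n) powr (1/5)"
  have l1: "1 \<le> log 2 (real n)" using n by simp
  have "1 \<le> real n powr (2/5)" "1 \<le> log 2 (real n) powr (1/5)"
    using n l1 by (auto intro: ge_one_powr_ge_zero)
  then have y1: "1 \<le> y" unfolding y_def using mult_mono by fastforce
  have y_mu: "y \<le> real (mu n)" unfolding mu_def y_def[symmetric] by (rule real_nat_ceiling_ge)
  have "y ^ 5 = (real n powr (2/5)) ^ 5 * (log 2 (real n) powr (1/5)) ^ 5"
    unfolding y_def by (rule power_mult_distrib)
  also have "\<dots> = real n powr (5 * (2/5)) * log 2 (real n) powr (5 * (1/5))"
    using n l1 powr_power[of "real n" "2/5" 5] powr_power[of "log 2 (real n)" "1/5" 5] by force
  also have "\<dots> = real n ^ 2 * log 2 (real n)"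
    using n l1 by simp
  finally show "real n ^ 2 * log 2 (real n) \<le> real (mu n) ^ 5"
    using y_mu y1 power_mono[of y "real (mu n)" 5] by simp
  show "1 \<le> mu n" using y_mu y1 by linarith
qed

lemma one_minus_power_le_exp:
  fixes p :: real
  assumes "0 \<le> p" "p \<le> 1"
  shows "(1 - p) ^ N \<le> exp (- (p * N))"
proof -
  have "(1 - p) ^ N \<le> exp (- p) ^ N"
    using assms exp_ge_add_one_self[of "- p"] by (intro power_mono) auto
  also have "\<dots> = exp (- (p * N))"
    by (simp flip: exp_of_nat_mult)
  finally show ?thesis .
qed

text \<open>With \<open>k > \<mu>\<^sup>3/n\<close> and \<open>N \<ge> k\<mu>/3\<close>, the expected number \<open>pN\<close> of sampled nodes is at least
  \<open>3\<mu>\<^sup>5/n\<^sup>2 \<ge> 3 log n\<close>.\<close>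
lemma sampling_miss_prob_le:
  fixes k N n :: nat
  assumes n: "2 \<le> n" and k: "real (mu n) ^ 3 / real n < real k" and N: "k * mu n \<le> 3 * N"
  shows "(1 - min 1 (9 * real (mu n) / real n)) ^ N \<le> 1 / real n ^ 3"
proof -
  define m where "m = real (mu n)"
  have m: "1 \<le> m" "real n ^ 2 * log 2 (real n) \<le> m ^ 5"
    using mu_pow_5_ge[OF n] by (auto simp: m_def)
  have k': "m ^ 3 / real n < real k" and N': "real k * m \<le> 3 * real N"
    using k N unfolding m_def by (auto simp flip: of_nat_mult)
  have npos: "0 < real n" using n by simp
  have "0 \<le> m ^ 3 / real n" using m(1) npos by simp
  then have "0 < real k" using k' by linarith
  with m(1) have "0 < real k * m" by simp
  then have "0 < N" using N' by linarith
  show ?thesis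
  proof (cases "real n \<le> 9 * m")
    case True
    then have "min 1 (9 * m / real n) = 1" using npos by simp
    then show ?thesis using \<open>0 < N\<close> by (simp add: m_def power_0_left)
  next
    case False
    define p where "p = 9 * m / real n"
    have p: "0 \<le> p" "p \<le> 1" using False m(1) npos by (auto simp: p_def)
    have "0 < ln (2::real)" "ln (2::real) \<le> 1" "0 \<le> ln (real n)"
      using n ln_le_minus_one[of 2] by auto
    then have "3 * ln (real n) \<le> 3 * log 2 (real n)"
      by (simp add: log_def le_divide_eq mult_left_le)
    also have "\<dots> \<le> 3 * (m ^ 5 / real n ^ 2)"
      using m(2) npos by (simp add: field_simps)
    also have "\<dots> = p * (m * (m ^ 3 / real n)) / 3"
      by (simp add: p_def power2_eq_square field_simps numeral_eq_Suc)
    also have "\<dots> \<le> p * (m * real k) / 3"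
      using k' m(1) p by (intro divide_right_mono mult_left_mono) auto
    also have "\<dots> \<le> p * real N"
      using mult_left_mono[OF N' p(1)] by (simp add: algebra_simps)
    finally have "exp (- (p * real N)) \<le> exp (- ln (real n ^ 3))"
      using npos by (simp add: ln_realpow)
    also have "\<dots> = 1 / real n ^ 3"
      using npos by (simp add: exp_minus inverse_eq_divide)
    finally show ?thesis
      using one_minus_power_le_exp[OF p, of N] False npos by (simp add: p_def m_def)
  qed
qed

lemma dist_H_edges_le_if_meets:
  assumes wpos: "\<forall>e\<in>E. 0 < w e" and spt: "\<forall>x\<in>V. is_spt V E w x (spt x)"
    and sp: "shortest_path V E w p s t" and "U \<subseteq> V"
    and near: "\<forall>u\<in>U. \<exists>i<length p. {p ! i, u} \<in> E \<and> w {p ! i, u} \<le> Wpath w p"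
    and hit: "S1 \<inter> U \<noteq> {}"
  shows "dist V (H_edges V E E0 spt sol S1 S2) w s t \<le> dist V E w s t + ereal (4 * Wpath w p)"
proof -
  obtain x i where x: "x \<in> S1" "x \<in> V"
    and i: "i < length p" "{p ! i, x} \<in> E" "w {p ! i, x} \<le> Wpath w p"
    using hit near \<open>U \<subseteq> V\<close> by blast
  have "spt x \<subseteq> H_edges V E E0 spt sol S1 S2"
    using x(1) unfolding H_edges_def H_edges2_def Let_def by blast
  then have "dist V (H_edges V E E0 spt sol S1 S2) w s t \<le> ereal (walk_weight w p + 2 * w {p ! i, x})"
    using i(2) spt x(2) by (intro dist_le_via_spt[OF sp i(1) x(2)]) auto
  also have "\<dots> \<le> ereal (walk_weight w p) + ereal (4 * Wpath w p)"
    using wpos i(2,3) by force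
  also have "\<dots> = dist V E w s t + ereal (4 * Wpath w p)"
    using sp by (simp add: shortest_path_def)
  finally show ?thesis .
qed

theorem lemma12:
  fixes V :: "'a set" and E :: "'a set set" and w :: "'a set \<Rightarrow> real" and eps :: real
    and E0 :: "'a set set" and cp :: "'a \<Rightarrow> 'a \<Rightarrow> 'a list"
    and spt :: "'a \<Rightarrow> 'a set set" and sol :: "'a set set \<Rightarrow> 'a \<Rightarrow> 'a \<Rightarrow> 'a list"
    and s t :: 'a
  defines "n \<equiv> card V"
  assumes graph: "simple_graph V E" and conn: "connected_graph V E"
    and wpos: "\<forall>e\<in>E. w e > 0"
    and eps: "0 < eps" "eps < 1"
    and H0: "lightweight_init V E w (mu n) E0"
    and canon: "\<forall>u\<in>V. \<forall>v\<in>V. shortest_path V E w (cp u v) u v"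
    and spt: "\<forall>x\<in>V. is_spt V E w x (spt x)"
    and sol: "\<forall>Eg x1. Eg \<subseteq> E \<longrightarrow> x1 \<in> V \<longrightarrow>
               weak_csssp_sol V E w cp Eg x1 eps (real (mu n) ^ 3 / real n + 2) (sol Eg x1)"
    and st: "s \<in> V" "t \<in> V"
    and missing: "real (length (filter (\<lambda>e. e \<notin> E0) (edges_of (cp s t)))) > real (mu n) ^ 3 / real n"
  shows "measure_pmf.prob
           (pair_pmf (sample_set V (min 1 (9 * real (mu n) / real n))) (sample_set V (1 / real (mu n))))
           {(S1, S2). dist V (H_edges V E E0 spt sol S1 S2) w s t
                        \<le> dist V E w s t + ereal (4 * Wpath w (cp s t))}
         \<ge> 1 - 1 / real n ^ 3"
proof -
  define p where "p = cp s t"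
  define q where "q = min 1 (9 * real (mu n) / real n)"
  have sp: "shortest_path V E w p s t" using canon st by (simp add: p_def)
  obtain U where U: "U \<subseteq> V" "length (filter (\<lambda>e. e \<notin> E0) (edges_of p)) * mu n \<le> 3 * card U"
    and near: "\<forall>u\<in>U. \<exists>i<length p. {p ! i, u} \<in> E \<and> w {p ! i, u} \<le> Wpath w p"
    using many_light_path_neighbours[OF graph wpos H0 sp] by blast
  have "edges_of p \<noteq> []"
    using missing by (auto simp: p_def divide_less_0_iff)
  then have "hd (edges_of p) \<in> E"
    using sp hd_in_set by (fastforce simp: shortest_path_def walk_from_to_def walk_def)
  then have n: "2 \<le> n" unfolding n_def by (rule simple_graph_card_ge_2[OF graph])
  have "1 - 1 / real n ^ 3 \<le> 1 - (1 - q) ^ card U"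
    using sampling_miss_prob_le[OF n _ U(2)] missing by (simp add: q_def p_def)
  also have "\<dots> = measure_pmf.prob (sample_set V q) {S. S \<inter> U \<noteq> {}}"
    using graph U(1) by (simp add: prob_sample_set_meets simple_graph_def q_def)
  also have "\<dots> \<le> measure_pmf.prob (pair_pmf (sample_set V q) (sample_set V (1 / real (mu n))))
           {(S1, S2). dist V (H_edges V E E0 spt sol S1 S2) w s t
                        \<le> dist V E w s t + ereal (4 * Wpath w (cp s t))}"
    using dist_H_edges_le_if_meets[OF wpos spt sp U(1) near] unfolding p_def
    by (intro measure_pair_pmf_ge_fst) auto
  finally show ?thesis by (simp add: q_def)
qed

end
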